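(* In any iteration of Algorithm 1, if there exist an integer $m\ge0$ and an index $j\in\{1,\dots,n\}$ such that $i^*=b^m(j)$, then $i_L<j$ (where $i^*,i_L$ are the quantities of that iteration).
   Context: Problem (P): given an integer $n\ge1$, reals $0<q_1\le\cdots\le q_n$, $z_1,\dots,z_n>0$ and $K>0$, maximize $\sum_{i=1}^n x_i$ subject to $0\le x_i\le q_i$, $0\le x_1\le\cdots\le x_n$, $\sum_{i=1}^n z_ix_i\le K$. For $1\le i<j\le n+1$ let $\mathrm{sum}(i,j)=z_i+\cdots+z_{j-1}$ and $\mathrm{avg}(i,j)=\mathrm{sum}(i,j)/(j-i)$. Algorithm 1 (run on an instance of (P)): Initialize $S=\{0,n+1\}$, $y_i=\mathrm{avg}(i,n+1)$ and $x_i=0$ for $i=1,\dots,n$, and $\hat B=K$. While $\hat B>0$ and $S\ne\{0,1,\dots,n+1\}$, perform an iteration: let $i^*$ be the index $i\in\{1,\dots,n\}\setminus S$ minimizing $y_i$, ties broken in favour of the smallest index; let $i_L=\max\{j\in S:j<i^*\}$ and $i_R=\min\{j\in S:j>i^*\}$; set $d=\min\{\hat B/((i_R-i^* )y_{i^*}),\ q_{i^*}-x_{i^*}\}$; set $\hat B\leftarrow\hat B-d(i_R-i^* )y_{i^*}$; set $x_i\leftarrow x_i+d$ for all $i^*\le i<i_R$; set $y_i\leftarrow\mathrm{avg}(i,i^* )$ for all $i_L<i<i^*$; add $i^*$ to $S$. Finally output $x_1,\dots,x_n$. Blocker: for $1\le i\le n$, $b(i)$ is the value of $i^*$ in the last iteration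 in which $y_i$ is updated (i.e. the last iteration with $i_L<i<i^*$); if $y_i$ is never updated, $b(i)=n+1$. Iterates: $b^0$ is the identity and $b^m(i)=b(b^{m-1}(i))$ (defined as long as $b^{m-1}(i)\le n$). *)

theory Defs
  imports Main "HOL.Real"
begin

text \<open>Instance data: n, q_1..q_n, z_1..z_n, K. Vectors are functions nat => real,
  only indices 1..n are relevant.\<close>

definition sumz :: "(nat \<Rightarrow> real) \<Rightarrow> nat \<Rightarrow> nat \<Rightarrow> real" where
  "sumz z i j = (\<Sum>k\<in>{i..<j}. z k)"

definition avg :: "(nat \<Rightarrow> real) \<Rightarrow> nat \<Rightarrow> nat \<Rightarrow> real" where
  "avg z i j = sumz z i j / real (j - i)"

record alg_state =
  S_of :: "nat set"
  y_of :: "nat \<Rightarrow> real"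
  x_of :: "nat \<Rightarrow> real"
  B_of :: real

definition init_state :: "nat \<Rightarrow> (nat \<Rightarrow> real) \<Rightarrow> real \<Rightarrow> alg_state" where
  "init_state n z K = \<lparr> S_of = {0, n+1}, y_of = (\<lambda>i. avg z i (n+1)),
                         x_of = (\<lambda>i. 0), B_of = K \<rparr>"

definition running :: "nat \<Rightarrow> alg_state \<Rightarrow> bool" where
  "running n st = (B_of st > 0 \<and> S_of st \<noteq> {0..n+1})"

definition istar :: "nat \<Rightarrow> alg_state \<Rightarrow> nat" where
  "istar n st = (LEAST i. i \<in> {1..n} - S_of st \<and>
                   (\<forall>j\<in>{1..n} - S_of st. y_of st i \<le> y_of st j))"

definition iL :: "nat \<Rightarrow> alg_state \<Rightarrow> nat" where
  "iL n st = Max {j \<in> S_of st. j < istar n st}"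

definition iR :: "nat \<Rightarrow> alg_state \<Rightarrow> nat" where
  "iR n st = Min {j \<in> S_of st. istar n st < j}"

definition step :: "nat \<Rightarrow> (nat \<Rightarrow> real) \<Rightarrow> (nat \<Rightarrow> real) \<Rightarrow> alg_state \<Rightarrow> alg_state" where
  "step n q z st =
    (let i = istar n st; l = iL n st; r = iR n st;
         d = min (B_of st / (real (r - i) * y_of st i)) (q i - x_of st i)
     in \<lparr> S_of = insert i (S_of st),
          y_of = (\<lambda>t. if l < t \<and> t < i then avg z t i else y_of st t),
          x_of = (\<lambda>t. if i \<le> t \<and> t < r then x_of st t + d else x_of st t),
          B_of = B_of st - d * real (r - i) * y_of st i \<rparr>)"

text \<open>State before iteration k (0-based). Iteration k is performed iff
  running n (alg n q z K k); once the loop stops the state stays fixed.\<close>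
primrec alg :: "nat \<Rightarrow> (nat \<Rightarrow> real) \<Rightarrow> (nat \<Rightarrow> real) \<Rightarrow> real \<Rightarrow> nat \<Rightarrow> alg_state" where
  "alg n q z K 0 = init_state n z K"
| "alg n q z K (Suc k) =
     (if running n (alg n q z K k) then step n q z (alg n q z K k) else alg n q z K k)"

definition updates :: "nat \<Rightarrow> (nat \<Rightarrow> real) \<Rightarrow> (nat \<Rightarrow> real) \<Rightarrow> real \<Rightarrow> nat \<Rightarrow> nat \<Rightarrow> bool" where
  "updates n q z K i k = (running n (alg n q z K k) \<and>
      iL n (alg n q z K k) < i \<and> i < istar n (alg n q z K k))"

definition blocker :: "nat \<Rightarrow> (nat \<Rightarrow> real) \<Rightarrow> (nat \<Rightarrow> real) \<Rightarrow> real \<Rightarrow> nat \<Rightarrow> nat" where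
  "blocker n q z K i =
     (if \<exists>k. updates n q z K i k
      then istar n (alg n q z K (GREATEST k. updates n q z K i k))
      else n + 1)"

end

theory Submission
  imports Defs
begin

text \<open>
  For \<open>m = 0\<close> the claim is \<open>i\<^sub>L < i*\<close>. Otherwise \<open>j' = b(j)\<close>
  satisfies \<open>j < j' \<le> i*\<close> and, by induction, \<open>i\<^sub>L < j'\<close>. Let \<open>t\<close> be an iteration updating
  \<open>y\<^sub>j\<close> with \<open>i* = j'\<close> (that it is the last such one is irrelevant). It cannot precede the current iteration \<open>k\<close>: then \<open>j'\<close> would
  already lie in \<open>S\<close> strictly between \<open>i\<^sub>L\<close> and \<open>i*\<close>, or coincide with \<open>i* \<notin> S\<close>. So
  \<open>k \<le> t\<close>, and as \<open>S\<close> only grows, the current \<open>i\<^sub>L\<close> is an element of \<open>S\<close> below \<open>j'\<close> at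
  iteration \<open>t\<close>, hence at most the \<open>i\<^sub>L\<close> of iteration \<open>t\<close>, which is below \<open>j\<close>.
\<close>

lemma istar_mem:
  assumes "running n st" "S_of st \<subseteq> {0..n+1}" "0 \<in> S_of st" "n+1 \<in> S_of st"
  shows "istar n st \<in> {1..n} - S_of st"
proof -
  let ?A = "{1..n} - S_of st"
  have ne: "?A \<noteq> {}"
  proof
    assume "?A = {}"
    then have "{1..n} \<subseteq> S_of st" by simp
    moreover have "{0..n+1} = insert 0 (insert (n+1) {1..n})" by auto
    ultimately have "{0..n+1} \<subseteq> S_of st" using assms(3,4) by simp
    with assms(1,2) show False by (simp add: running_def)
  qed
  have fin: "finite ?A" by simp
  let ?a = "arg_min_on (y_of st) ?A"
  have "?a \<in> ?A \<and> (\<forall>j\<in>?A. y_of st ?a \<le> y_of st j)"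
    using arg_min_if_finite(1)[OF fin ne] arg_min_least[OF fin ne] by blast
  then have "istar n st \<in> ?A \<and> (\<forall>j\<in>?A. y_of st (istar n st) \<le> y_of st j)"
    unfolding istar_def by (rule LeastI)
  then show ?thesis ..
qed

lemma S_of_step: "S_of (step n q z st) = insert (istar n st) (S_of st)"
  by (simp add: step_def Let_def)

lemma S_of_alg_bounds:
  "S_of (alg n q z K k) \<subseteq> {0..n+1} \<and> 0 \<in> S_of (alg n q z K k) \<and> n+1 \<in> S_of (alg n q z K k)"
proof (induction k)
  case 0
  then show ?case by (auto simp: init_state_def)
next
  case (Suc k)
  then show ?case
    using istar_mem[of n "alg n q z K k"] by (auto simp: S_of_step)
qed

lemma istar_alg_mem:
  "running n (alg n q z K k) \<Longrightarrow> istar n (alg n q z K k) \<in> {1..n} - S_of (alg n q z K k)"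
  using istar_mem S_of_alg_bounds by blast

lemma S_of_alg_mono: "k \<le> t \<Longrightarrow> S_of (alg n q z K k) \<subseteq> S_of (alg n q z K t)"
  by (rule lift_Suc_mono_le[of "\<lambda>k. S_of (alg n q z K k)"]) (auto simp: S_of_step)

lemma istar_mem_S_of_alg_Suc:
  "running n (alg n q z K k) \<Longrightarrow> istar n (alg n q z K k) \<in> S_of (alg n q z K (Suc k))"
  by (simp add: S_of_step)

lemma card_S_of_alg_running:
  "running n (alg n q z K k) \<Longrightarrow> card (S_of (alg n q z K k)) = k + 2"
proof (induction k)
  case 0
  then show ?case by (simp add: init_state_def)
next
  case (Suc k)
  then have running: "running n (alg n q z K k)"
    by (auto split: if_splits)
  have "S_of (alg n q z K k) \<subseteq> {0..n+1}"
    using S_of_alg_bounds by blast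
  then have "finite (S_of (alg n q z K k))"
    by (rule finite_subset) simp
  moreover have "istar n (alg n q z K k) \<notin> S_of (alg n q z K k)"
    using istar_alg_mem[OF running] by blast
  ultimately have "card (S_of (alg n q z K (Suc k))) = Suc (card (S_of (alg n q z K k)))"
    using running by (simp add: S_of_step)
  with Suc.IH[OF running] show ?case by simp
qed

lemma running_le:
  assumes "running n (alg n q z K k)"
  shows "k \<le> n"
proof -
  from assms have "k + 2 = card (S_of (alg n q z K k))"
    by (simp add: card_S_of_alg_running)
  also have "\<dots> \<le> card {0..n+1}"
    using S_of_alg_bounds by (intro card_mono) auto
  finally show ?thesis by simp
qed

lemma iL_greatest:
  assumes "0 \<in> S_of st" "0 < istar n st"
  shows "iL n st \<in> S_of st \<and> iL n st < istar n st \<and> (\<forall>s\<in>S_of st. s < istar n st \<longrightarrow> s \<le> iL n st)"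
proof -
  let ?B = "{s \<in> S_of st. s < istar n st}"
  have fin: "finite ?B" by (rule finite_subset[of _ "{..<istar n st}"]) auto
  moreover have "?B \<noteq> {}" using assms by blast
  ultimately have "Max ?B \<in> ?B" by (rule Max_in)
  with Max_ge[OF fin] show ?thesis unfolding iL_def by blast
qed

lemma
  assumes "running n (alg n q z K k)"
  shows iL_alg_mem: "iL n (alg n q z K k) \<in> S_of (alg n q z K k)"
    and iL_alg_less_istar: "iL n (alg n q z K k) < istar n (alg n q z K k)"
    and le_iL_alg: "\<lbrakk>s \<in> S_of (alg n q z K k); s < istar n (alg n q z K k)\<rbrakk>
      \<Longrightarrow> s \<le> iL n (alg n q z K k)"
  using iL_greatest[of "alg n q z K k" n] S_of_alg_bounds istar_alg_mem[OF assms] by auto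

lemma blockerE:
  assumes "blocker n q z K j \<le> n"
  obtains t where "updates n q z K j t" "blocker n q z K j = istar n (alg n q z K t)"
proof -
  have updated: "\<exists>t. updates n q z K j t"
    using assms by (rule_tac ccontr) (simp add: blocker_def)
  then obtain t where "updates n q z K j t" by blast
  moreover have "\<forall>t. updates n q z K j t \<longrightarrow> t \<le> n"
    using running_le by (auto simp: updates_def)
  ultimately have "updates n q z K j (GREATEST t. updates n q z K j t)"
    by (blast intro: GreatestI_nat)
  with updated that show ?thesis by (simp add: blocker_def)
qed

lemma less_blocker:
  assumes "i \<le> n"
  shows "i < blocker n q z K i"
proof (cases "blocker n q z K i \<le> n")
  case True
  then obtain t where "updates n q z K i t" "blocker n q z K i = istar n (alg n q z K t)"
    by (rule blockerE)
  then show ?thesis by (simp add: updates_def)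
next
  case False
  with assms show ?thesis by simp
qed

lemma le_funpow_blocker:
  "\<forall>m' < m. (blocker n q z K ^^ m') i \<le> n \<Longrightarrow> i \<le> (blocker n q z K ^^ m) i"
proof (induction m)
  case 0
  then show ?case by simp
next
  case (Suc m)
  then have "(blocker n q z K ^^ m) i < (blocker n q z K ^^ Suc m) i"
    using less_blocker by simp
  with Suc show ?case by simp
qed

lemma iL_less_if_blocker_between:
  assumes running: "running n (alg n q z K k)"
    and below_istar: "blocker n q z K j \<le> istar n (alg n q z K k)"
    and above_iL: "iL n (alg n q z K k) < blocker n q z K j"
  shows "iL n (alg n q z K k) < j"
proof -
  let ?b = "blocker n q z K j" and ?st = "alg n q z K k"
  have "?b \<le> n" using below_istar istar_alg_mem[OF running] by auto
  then obtain t where upd: "updates n q z K j t" and b_eq: "?b = istar n (alg n q z K t)"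
    by (rule blockerE)
  then have running_t: "running n (alg n q z K t)" by (simp add: updates_def)
  have "k \<le> t"
  proof (rule ccontr)
    assume "\<not> k \<le> t"
    then have "S_of (alg n q z K (Suc t)) \<subseteq> S_of ?st"
      by (intro S_of_alg_mono) simp
    with istar_mem_S_of_alg_Suc[OF running_t] b_eq have "?b \<in> S_of ?st" by auto
    moreover have "?b \<noteq> istar n ?st" using calculation istar_alg_mem[OF running] by auto
    ultimately have "?b \<le> iL n ?st" using le_iL_alg[OF running] below_istar by simp
    with above_iL show False by simp
  qed
  then have "iL n ?st \<in> S_of (alg n q z K t)"
    using S_of_alg_mono[of k t n q z K] iL_alg_mem[OF running] by blast
  with above_iL b_eq have "iL n ?st \<le> iL n (alg n q z K t)"
    using le_iL_alg[OF running_t] by simp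
  also have "\<dots> < j" using upd by (simp add: updates_def)
  finally show ?thesis .
qed

theorem lemma10:
  fixes n :: nat and q z :: "nat \<Rightarrow> real" and K :: real and k m j :: nat
  assumes "n \<ge> 1"
    and "\<forall>i\<in>{1..n}. 0 < q i"
    and "\<forall>i j. 1 \<le> i \<and> i \<le> j \<and> j \<le> n \<longrightarrow> q i \<le> q j"
    and "\<forall>i\<in>{1..n}. 0 < z i"
    and "K > 0"
    and "running n (alg n q z K k)"
    and "j \<in> {1..n}"
    and "\<forall>m' < m. (blocker n q z K ^^ m') j \<le> n"
    and "istar n (alg n q z K k) = (blocker n q z K ^^ m) j"
  shows "iL n (alg n q z K k) < j"
  using assms(7-9)
proof (induction m arbitrary: j)
  case 0
  then show ?case using iL_alg_less_istar[OF assms(6)] by simp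
next
  case (Suc m)
  let ?b = "blocker n q z K" and ?st = "alg n q z K k"
  have shift: "(?b ^^ Suc i) j = (?b ^^ i) (?b j)" for i
    by (simp only: funpow_Suc_right comp_apply)
  have chain: "\<forall>m' < m. (?b ^^ m') (?b j) \<le> n"
  proof (intro allI impI)
    fix m' assume "m' < m"
    then have "(?b ^^ Suc m') j \<le> n" using Suc.prems(2) by blast
    then show "(?b ^^ m') (?b j) \<le> n" by (simp only: shift)
  qed
  have istar_eq: "istar n ?st = (?b ^^ m) (?b j)"
    using Suc.prems(3) shift by simp
  have below_istar: "?b j \<le> istar n ?st"
    using le_funpow_blocker[OF chain] istar_eq by simp
  have "?b j \<in> {1..n}"
    using below_istar istar_alg_mem[OF assms(6)] less_blocker[of j n q z K] Suc.prems(1) by auto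
  then have "iL n ?st < ?b j" using Suc.IH chain istar_eq by simp
  with below_istar show ?case by (rule iL_less_if_blocker_between[OF assms(6)])
qed

end
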